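(* Let $K, L \ge 1$ be integers, $d=\sum_{k=1}^K d_k$, and write $\bm w=[\bm w_1^{\mathsf T},\dots,\bm w_K^{\mathsf T}]^{\mathsf T}\in\mathbb R^d$ with $\bm w_k\in\mathbb R^{d_k}$. Suppose $F:\mathbb R^d\to\mathbb R$ has the form $$F(\bm w)=\frac1L\sum_{i=1}^L f_i(\bm w)+\lambda\sum_{k=1}^K r_k(\bm w),$$ where the sample losses $f_i$ have the vertical-FL structure: for each $i\in[L]$, $k\in[K]$ there are continuously differentiable local prediction functions $\bm w_k\mapsto g_k(\bm w_k,\bm x_{i,k})\in\mathbb R$ (with gradient $\nabla g_{k,i}(\bm w_k)=\partial g_k(\bm w_k,\bm x_{i,k})/\partial \bm w_k$) and a differentiable function $G_i:\mathbb R\to\mathbb R$ such that, with $s_i(\bm w)=\sum_{k=1}^K g_k(\bm w_k,\bm x_{i,k})$, $$\frac{\partial f_i(\bm w)}{\partial \bm w_k}=G_i\big(s_i(\bm w)\big)\,\nabla g_{k,i}(\bm w_k).$$ Denote $\nabla_k F(\bm w)=\partial F(\bm w)/\partial\bm w_k$. Assume $F$ is $\alpha$-strongly convex and $\beta$-smooth on $\mathbb R^d$ with $0<\alpha\le\beta$, and let $\bm w^*$ be its minimizer. Consider the noisy iteration, started from a deterministic $\bm w^{(0)}$, with learning rate $1/\beta$: $$\bm w_k^{(t+1)}=\bm w_k^{(t)}-\frac1\beta\Big(\nabla_k F(\bm w^{(t)})+\bm e_k^{(t)}\Big),\qquad \bm e_k^{(t)}=\frac1L\sum_{i=1}^L\Big(G_i'\big(s_i(\bm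 w^{(t)})\big)\,n^{(t)}_{\mathrm{UL}}(i)+n^{(t)}_{\mathrm{DL},k}(i)\Big)\nabla g_{k,i}(\bm w_k^{(t)}),$$ for $k\in[K]$, $t=0,1,\dots$, where the real random variables $n^{(t)}_{\mathrm{UL}}(i)\sim\mathcal N(0,\sigma^2_{\mathrm{UL}}(t))$ and $n^{(t)}_{\mathrm{DL},k}(i)\sim\mathcal N(0,\sigma^2_{\mathrm{DL},k}(t))$ (with deterministic variances) are all mutually independent over $i,k,t$ and between uplink and downlink. (This is the first-order model in which the device's received estimate of $G_i$ is $G_i(s_i)+G_i'(s_i)n_{\mathrm{UL}}(i)+n_{\mathrm{DL},k}(i)$.) Let $\rho=1-\alpha/\beta$ and define $$\Phi_{1,k}(t)=\sum_{i=1}^L G_i'\big(s_i(\bm w^{(t)})\big)^2\big\|\nabla g_{k,i}(\bm w^{(t)}_k)\big\|^2,\qquad \Phi_{2,k}(t)=\sum_{i=1}^L\big\|\nabla g_{k,i}(\bm w^{(t)}_k)\big\|^2$$ (for linear local predictors $g_k(\bm w_k,\bm x_{i,k})=\bm w_k^{\mathsf T}\bm x_{i,k}$ one has $\nabla g_{k,i}=\bm x_{i,k}$). Then for every $T\ge1$, $$\mathbb E\big[F(\bm w^{(T)})-F(\bm w^* )\big]\le \rho^T\big(F(\bm w^{(0)})-F(\bm w^* )\big)+\frac{3}{2L^2\beta}\,B(T),$$ where $$B(T)=\sum_{t=0}^{T-1}\rho^{T-t-1}\sum_{k=1}^K\Big(\sigma^2_{\mathrm{UL}}(t)\,\mathbb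 E[\Phi_{1,k}(t)]+\sigma^2_{\mathrm{DL},k}(t)\,\mathbb E[\Phi_{2,k}(t)]\Big).$$
   Context: Vertical federated learning: $K$ devices each hold a disjoint block $\bm x_{i,k}\in\mathbb R^{d_k}$ of the features of each of $L$ training samples and a sub-model $\bm w_k$; the server aggregates local predictions $s_i=\sum_k g_k(\bm w_k,\bm x_{i,k})$ and returns $G_i(s_i)$, from which each device forms its partial gradient. $\alpha$-strong convexity: $F(\bm y)\ge F(\bm x)+\nabla F(\bm x)^{\mathsf T}(\bm y-\bm x)+\frac\alpha2\|\bm y-\bm x\|^2$ for all $\bm x,\bm y$; $\beta$-smoothness: $F(\bm y)\le F(\bm x)+\nabla F(\bm x)^{\mathsf T}(\bm y-\bm x)+\frac\beta2\|\bm y-\bm x\|^2$ for all $\bm x,\bm y$. $\sigma^2_{\mathrm{UL}}(t)$ and $\sigma^2_{\mathrm{DL},k}(t)$ are the effective uplink and downlink communication-noise variances in round $t$; expectations are over all these noises. *)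

theory Defs
  imports "HOL-Analysis.Analysis" "HOL-Probability.Probability"
begin

text \<open>Vectors of \<open>\<real>^d\<close> are \<open>real ^ 'n\<close>; the coordinate set \<open>'n\<close> is partitioned
  into K blocks by \<open>blk :: 'n \<Rightarrow> nat\<close> (block index \<open>< K\<close>).\<close>

definition block_proj :: "('n::finite \<Rightarrow> nat) \<Rightarrow> nat \<Rightarrow> real ^ 'n \<Rightarrow> real ^ 'n" where
  "block_proj blk k w = (\<chi> j. if blk j = k then w $ j else 0)"

definition strongly_convex_grad :: "(real ^ 'n::finite \<Rightarrow> real) \<Rightarrow> (real ^ 'n \<Rightarrow> real ^ 'n) \<Rightarrow> real \<Rightarrow> bool" where
  "strongly_convex_grad F gradF \<alpha> \<longleftrightarrow>
     (\<forall>x y. F y \<ge> F x + gradF x \<bullet> (y - x) + \<alpha> / 2 * (norm (y - x))\<^sup>2)"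

definition smooth_grad :: "(real ^ 'n::finite \<Rightarrow> real) \<Rightarrow> (real ^ 'n \<Rightarrow> real ^ 'n) \<Rightarrow> real \<Rightarrow> bool" where
  "smooth_grad F gradF \<beta> \<longleftrightarrow>
     (\<forall>x y. F y \<le> F x + gradF x \<bullet> (y - x) + \<beta> / 2 * (norm (y - x))\<^sup>2)"

definition gaussian_rv :: "'a measure \<Rightarrow> ('a \<Rightarrow> real) \<Rightarrow> real \<Rightarrow> bool" where
  "gaussian_rv M X v \<longleftrightarrow> v > 0 \<and> distributed M lborel X (\<lambda>x. ennreal (normal_density 0 (sqrt v) x))"

text \<open>Index set of all noise variables: uplink noise (t, i), downlink noise (t, k, i).\<close>

datatype noise_idx = NUL nat nat | NDL nat nat nat

fun noise_family :: "(nat \<Rightarrow> nat \<Rightarrow> 'a \<Rightarrow> real) \<Rightarrow> (nat \<Rightarrow> nat \<Rightarrow> nat \<Rightarrow> 'a \<Rightarrow> real)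
    \<Rightarrow> noise_idx \<Rightarrow> 'a \<Rightarrow> real" where
  "noise_family nUL nDL (NUL t i) = nUL t i"
| "noise_family nUL nDL (NDL t k i) = nDL t k i"

definition noise_index_set :: "nat \<Rightarrow> nat \<Rightarrow> noise_idx set" where
  "noise_index_set K L = {NUL t i | t i. i < L} \<union> {NDL t k i | t k i. k < K \<and> i < L}"

end

theory Submission
  imports Defs
begin

text \<open>A step with step size \<open>1/\<beta>\<close> and gradient error \<open>e\<close> decreases \<open>F\<close> by \<open>|\<nabla>F|\<^sup>2/(2\<beta>)\<close> up to
  an error \<open>|e|\<^sup>2/(2\<beta>)\<close> (smoothness), and strong convexity gives \<open>|\<nabla>F|\<^sup>2 \<ge> 2\<alpha> (F - F\<^sup>*)\<close>; so the
  optimality gap contracts by \<open>\<rho> = 1 - \<alpha>/\<beta>\<close> per step plus \<open>|e|\<^sup>2/(2\<beta>)\<close>, and unrolling this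
  recursion gives the bound pathwise. In expectation, the iterate of round \<open>t\<close> is a measurable
  function of the noise of earlier rounds and hence independent of the noise of round \<open>t\<close>, while
  every coordinate of the error is linear in that noise. As the noise variables are centred and
  pairwise uncorrelated, all cross terms of the expected squared error vanish and what remains is
  \<open>L\<^sup>-\<^sup>2 \<Sum>\<^sub>k (\<sigma>\<^sup>2\<^sub>U\<^sub>L E \<Phi>\<^sub>1\<^sub>,\<^sub>k + \<sigma>\<^sup>2\<^sub>D\<^sub>L\<^sub>,\<^sub>k E \<Phi>\<^sub>2\<^sub>,\<^sub>k)\<close> (with room to spare for the constant \<open>3\<close>).
  Expectations are taken as nonnegative integrals, so no integrability of the iterates is needed.\<close>

section \<open>Inexact gradient descent\<close>

lemma strongly_convex_grad_gap_le:
  assumes sc: "strongly_convex_grad F gF \<alpha>" and \<alpha>: "0 < \<alpha>"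
  shows "F x - F y \<le> (norm (gF x))\<^sup>2 / (2 * \<alpha>)"
proof -
  define d where "d = y - x"
  have "F x + gF x \<bullet> d + \<alpha> / 2 * (norm d)\<^sup>2 \<le> F y"
    using sc unfolding strongly_convex_grad_def d_def by blast
  moreover have "0 \<le> (norm (gF x + \<alpha> *\<^sub>R d))\<^sup>2 / (2 * \<alpha>)"
    using \<alpha> by simp
  moreover have "(norm (gF x + \<alpha> *\<^sub>R d))\<^sup>2 = (norm (gF x))\<^sup>2 + 2 * \<alpha> * (gF x \<bullet> d) + \<alpha>\<^sup>2 * (norm d)\<^sup>2"
    unfolding power2_norm_eq_inner
    by (simp add: inner_add_left inner_add_right inner_commute algebra_simps power2_eq_square)
  then have "(norm (gF x + \<alpha> *\<^sub>R d))\<^sup>2 / (2 * \<alpha>)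
      = (norm (gF x))\<^sup>2 / (2 * \<alpha>) + gF x \<bullet> d + \<alpha> / 2 * (norm d)\<^sup>2"
    using \<alpha> by (simp add: field_simps power2_eq_square)
  ultimately show ?thesis by linarith
qed

lemma smooth_grad_inexact_step:
  assumes sm: "smooth_grad F gF \<beta>" and \<beta>: "0 < \<beta>"
  shows "F (x - (1 / \<beta>) *\<^sub>R (gF x + e)) \<le> F x - (norm (gF x))\<^sup>2 / (2 * \<beta>) + (norm e)\<^sup>2 / (2 * \<beta>)"
proof -
  let ?d = "- ((1 / \<beta>) *\<^sub>R (gF x + e))"
  define a c n where "a = (norm (gF x))\<^sup>2" and "c = gF x \<bullet> e" and "n = (norm e)\<^sup>2"
  have "F (x + ?d) \<le> F x + gF x \<bullet> (x + ?d - x) + \<beta> / 2 * (norm (x + ?d - x))\<^sup>2"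
    using sm unfolding smooth_grad_def by blast
  then have "F (x + ?d) \<le> F x + (gF x \<bullet> ?d + \<beta> / 2 * (norm ?d)\<^sup>2)"
    by (simp only: add_diff_cancel_left' add.assoc)
  also have "gF x \<bullet> ?d = - (a + c) / \<beta>"
    using \<beta> by (simp add: a_def c_def inner_add_right inner_diff_right power2_norm_eq_inner field_simps)
  also have "(norm ?d)\<^sup>2 = (a + 2 * c + n) / \<beta>\<^sup>2"
    unfolding a_def c_def n_def power2_norm_eq_inner
    by (simp add: inner_add_left inner_add_right inner_commute power2_eq_square)
  also have "- (a + c) / \<beta> + \<beta> / 2 * ((a + 2 * c + n) / \<beta>\<^sup>2) = n / (2 * \<beta>) - a / (2 * \<beta>)"
    using \<beta> by (simp add: field_simps power2_eq_square)
  finally show ?thesis by (simp add: a_def n_def)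
qed

lemma inexact_gradient_step_contraction:
  assumes sc: "strongly_convex_grad F gF \<alpha>" and sm: "smooth_grad F gF \<beta>"
    and \<alpha>: "0 < \<alpha>" "\<alpha> \<le> \<beta>"
  shows "F (x - (1 / \<beta>) *\<^sub>R (gF x + e)) - F y \<le> (1 - \<alpha> / \<beta>) * (F x - F y) + (norm e)\<^sup>2 / (2 * \<beta>)"
proof -
  have \<beta>: "0 < \<beta>" using \<alpha> by linarith
  have "(\<alpha> / \<beta>) * (F x - F y) \<le> (\<alpha> / \<beta>) * ((norm (gF x))\<^sup>2 / (2 * \<alpha>))"
    using strongly_convex_grad_gap_le[OF sc \<alpha>(1)] \<alpha> \<beta> by (intro mult_left_mono) auto
  also have "\<dots> = (norm (gF x))\<^sup>2 / (2 * \<beta>)"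
    using \<alpha> by (simp add: field_simps)
  finally show ?thesis
    using smooth_grad_inexact_step[OF sm \<beta>, of x e] by (simp add: algebra_simps)
qed

lemma linear_recurrence_unroll:
  fixes D q :: "nat \<Rightarrow> real"
  assumes step: "\<And>t. D (Suc t) \<le> \<rho> * D t + q t" and \<rho>: "0 \<le> \<rho>"
  shows "D T \<le> \<rho> ^ T * D 0 + (\<Sum>t<T. \<rho> ^ (T - t - 1) * q t)"
proof (induction T)
  case 0
  then show ?case by simp
next
  case (Suc T)
  have shift: "\<rho> * (\<Sum>t<T. \<rho> ^ (T - t - 1) * q t) = (\<Sum>t<T. \<rho> ^ (Suc T - t - 1) * q t)"
  proof (unfold sum_distrib_left, intro sum.cong refl)
    fix t assume "t \<in> {..<T}"
    then have "Suc T - t - 1 = Suc (T - t - 1)" by auto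
    then show "\<rho> * (\<rho> ^ (T - t - 1) * q t) = \<rho> ^ (Suc T - t - 1) * q t" by simp
  qed
  have "D (Suc T) \<le> \<rho> * D T + q T" by (rule step)
  also have "\<dots> \<le> \<rho> * (\<rho> ^ T * D 0 + (\<Sum>t<T. \<rho> ^ (T - t - 1) * q t)) + q T"
    using Suc \<rho> by (intro add_right_mono mult_left_mono)
  also have "\<dots> = \<rho> ^ Suc T * D 0 + ((\<Sum>t<T. \<rho> ^ (Suc T - t - 1) * q t) + \<rho> ^ (Suc T - T - 1) * q T)"
    by (simp only: distrib_left shift) simp
  also have "\<dots> = \<rho> ^ Suc T * D 0 + (\<Sum>t<Suc T. \<rho> ^ (Suc T - t - 1) * q t)"
    by (simp only: sum.lessThan_Suc)
  finally show ?case .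
qed

section \<open>Second moments of sums with independent uncorrelated noise\<close>

lemma gaussian_rv_moments:
  assumes "prob_space M" and X: "gaussian_rv M X v"
  shows gaussian_rv_measurable: "X \<in> borel_measurable M"
    and gaussian_rv_integrable: "integrable M X"
    and gaussian_rv_mean: "integral\<^sup>L M X = 0"
    and gaussian_rv_square_integrable: "integrable M (\<lambda>\<omega>. (X \<omega>)\<^sup>2)"
    and gaussian_rv_second_moment: "integral\<^sup>L M (\<lambda>\<omega>. (X \<omega>)\<^sup>2) = v"
proof -
  interpret prob_space M by fact
  have v: "v > 0" and D: "distributed M lborel X (\<lambda>x. ennreal (normal_density 0 (sqrt v) x))"
    using X by (auto simp: gaussian_rv_def)
  have \<sigma>: "sqrt v > 0" using v by simp
  show "X \<in> borel_measurable M" using D by (auto dest: distributed_measurable)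
  show "integrable M X"
    using distributed_integrable[OF D, of "\<lambda>x. x"] integrable_normal_moment_nz_1[OF \<sigma>, of 0] by simp
  show mean: "integral\<^sup>L M X = 0"
    using normal_distributed_expectation[OF \<sigma> D] by simp
  have "integrable lborel (\<lambda>x. normal_density 0 (sqrt v) x * (x - 0) ^ 2)"
    by (rule integrable_normal_moment[OF \<sigma>])
  then show "integrable M (\<lambda>\<omega>. (X \<omega>)\<^sup>2)"
    using distributed_integrable[OF D, of "\<lambda>x. x^2"] by simp
  show "integral\<^sup>L M (\<lambda>\<omega>. (X \<omega>)\<^sup>2) = v"
    using normal_distributed_variance[OF \<sigma> D] v by (simp add: mean)
qed

lemma (in prob_space) indep_gaussians_uncorrelated:
  assumes ind: "indep_vars (\<lambda>_. borel) X I"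
    and gauss: "\<And>i. i \<in> I \<Longrightarrow> gaussian_rv M (X i) (v i)" and I: "i \<in> I" "j \<in> I"
  shows "(\<integral>\<omega>. X i \<omega> * X j \<omega> \<partial>M) = (if i = j then v i else 0)"
proof (cases "i = j")
  case True
  then show ?thesis
    using gaussian_rv_second_moment[OF prob_space_axioms gauss[OF I(1)]] by (simp add: power2_eq_square)
next
  case False
  have restr: "indep_var (PiM {i} (\<lambda>_. borel)) (\<lambda>\<omega>. restrict (\<lambda>l. X l \<omega>) {i})
      (PiM {j} (\<lambda>_. borel)) (\<lambda>\<omega>. restrict (\<lambda>l. X l \<omega>) {j})"
    using False I by (intro indep_var_restrict[OF ind]) auto
  have "indep_var borel (X i) borel (X j)"
    using indep_var_compose[OF restr measurable_component_singleton measurable_component_singleton]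
    by (simp add: comp_def)
  then have "(\<integral>\<omega>. X i \<omega> * X j \<omega> \<partial>M) = (\<integral>\<omega>. X i \<omega> \<partial>M) * (\<integral>\<omega>. X j \<omega> \<partial>M)"
    using gaussian_rv_integrable[OF prob_space_axioms gauss] I by (intro indep_var_lebesgue_integral)
  then show ?thesis
    using False gaussian_rv_mean[OF prob_space_axioms gauss[OF I(1)]] by simp
qed

lemma (in prob_space) integrable_mult_of_square_integrable:
  fixes f g :: "'a \<Rightarrow> real"
  assumes "f \<in> borel_measurable M" "g \<in> borel_measurable M"
    and "integrable M (\<lambda>\<omega>. (f \<omega>)\<^sup>2)" "integrable M (\<lambda>\<omega>. (g \<omega>)\<^sup>2)"
  shows "integrable M (\<lambda>\<omega>. f \<omega> * g \<omega>)"
proof (rule Bochner_Integration.integrable_bound)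
  show "integrable M (\<lambda>\<omega>. (f \<omega>)\<^sup>2 + (g \<omega>)\<^sup>2)" using assms by auto
  show "AE \<omega> in M. norm (f \<omega> * g \<omega>) \<le> norm ((f \<omega>)\<^sup>2 + (g \<omega>)\<^sup>2)"
  proof (rule AE_I2)
    fix \<omega>
    have "2 * \<bar>f \<omega>\<bar> * \<bar>g \<omega>\<bar> \<le> (f \<omega>)\<^sup>2 + (g \<omega>)\<^sup>2"
      using sum_squares_bound[of "\<bar>f \<omega>\<bar>" "\<bar>g \<omega>\<bar>"] by simp
    moreover have "0 \<le> \<bar>f \<omega>\<bar> * \<bar>g \<omega>\<bar>" by simp
    ultimately have "\<bar>f \<omega>\<bar> * \<bar>g \<omega>\<bar> \<le> (f \<omega>)\<^sup>2 + (g \<omega>)\<^sup>2" by linarith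
    then show "norm (f \<omega> * g \<omega>) \<le> norm ((f \<omega>)\<^sup>2 + (g \<omega>)\<^sup>2)" by (simp add: abs_mult)
  qed
qed (use assms in auto)

lemma (in prob_space) integral_square_bilinear_indep:
  fixes y :: "'l \<Rightarrow> 'b \<Rightarrow> real" and z :: "'l \<Rightarrow> 'b \<Rightarrow> real"
  assumes ind: "indep_var N1 X1 N2 X2" and S: "finite S"
    and y: "\<And>l. l \<in> S \<Longrightarrow> y l \<in> borel_measurable N1"
    and z: "\<And>l. l \<in> S \<Longrightarrow> z l \<in> borel_measurable N2"
    and ysq: "\<And>l. l \<in> S \<Longrightarrow> integrable M (\<lambda>\<omega>. (y l (X1 \<omega>))\<^sup>2)"
    and zsq: "\<And>l. l \<in> S \<Longrightarrow> integrable M (\<lambda>\<omega>. (z l (X2 \<omega>))\<^sup>2)"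
    and zcov: "\<And>l l'. l \<in> S \<Longrightarrow> l' \<in> S \<Longrightarrow>
      (\<integral>\<omega>. z l (X2 \<omega>) * z l' (X2 \<omega>) \<partial>M) = (if l = l' then v l else 0)"
  shows "integrable M (\<lambda>\<omega>. (\<Sum>l\<in>S. y l (X1 \<omega>) * z l (X2 \<omega>))\<^sup>2)"
    and "(\<integral>\<omega>. (\<Sum>l\<in>S. y l (X1 \<omega>) * z l (X2 \<omega>))\<^sup>2 \<partial>M) = (\<Sum>l\<in>S. v l * (\<integral>\<omega>. (y l (X1 \<omega>))\<^sup>2 \<partial>M))"
proof -
  have X1: "X1 \<in> measurable M N1" and X2: "X2 \<in> measurable M N2"
    using ind by (rule indep_var_rv1, rule indep_var_rv2)
  define Y where "Y l l' = (\<lambda>\<omega>. y l (X1 \<omega>) * y l' (X1 \<omega>))" for l l'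
  define Z where "Z l l' = (\<lambda>\<omega>. z l (X2 \<omega>) * z l' (X2 \<omega>))" for l l'
  have YZ: "integrable M (\<lambda>\<omega>. Y l l' \<omega> * Z l l' \<omega>)
      \<and> (\<integral>\<omega>. Y l l' \<omega> * Z l l' \<omega> \<partial>M) = (\<integral>\<omega>. Y l l' \<omega> \<partial>M) * (if l = l' then v l else 0)"
    if l: "l \<in> S" "l' \<in> S" for l l'
  proof -
    have iYZ: "indep_var borel (Y l l') borel (Z l l')"
      using indep_var_compose[OF ind, of "\<lambda>x. y l x * y l' x" borel "\<lambda>x. z l x * z l' x" borel]
        y[OF l(1)] y[OF l(2)] z[OF l(1)] z[OF l(2)]
      by (simp add: comp_def Y_def Z_def)
    have iY: "integrable M (Y l l')" and iZ: "integrable M (Z l l')"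
      unfolding Y_def Z_def using l
      by (intro integrable_mult_of_square_integrable measurable_compose[OF X1 y] measurable_compose[OF X2 z]
          ysq zsq; simp)+
    show ?thesis
      using indep_var_integrable[OF iYZ iY iZ] indep_var_lebesgue_integral[OF iYZ iY iZ] zcov[OF l]
      by (simp add: Z_def)
  qed
  have sq: "(\<Sum>l\<in>S. y l (X1 \<omega>) * z l (X2 \<omega>))\<^sup>2 = (\<Sum>l\<in>S. \<Sum>l'\<in>S. Y l l' \<omega> * Z l l' \<omega>)" for \<omega>
    by (simp add: power2_eq_square sum_product mult_ac Y_def Z_def)
  show "integrable M (\<lambda>\<omega>. (\<Sum>l\<in>S. y l (X1 \<omega>) * z l (X2 \<omega>))\<^sup>2)"
    unfolding sq using YZ by (intro Bochner_Integration.integrable_sum) auto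
  have "(\<integral>\<omega>. (\<Sum>l\<in>S. y l (X1 \<omega>) * z l (X2 \<omega>))\<^sup>2 \<partial>M)
      = (\<Sum>l\<in>S. \<Sum>l'\<in>S. (\<integral>\<omega>. Y l l' \<omega> \<partial>M) * (if l = l' then v l else 0))"
    unfolding sq using YZ by (simp add: integrable_sum)
  also have "\<dots> = (\<Sum>l\<in>S. (\<integral>\<omega>. Y l l \<omega> \<partial>M) * v l)"
    using S by (intro sum.cong refl) (simp add: if_distrib[of "\<lambda>c. _ * c"] sum.delta' cong: if_cong)
  also have "\<dots> = (\<Sum>l\<in>S. v l * (\<integral>\<omega>. (y l (X1 \<omega>))\<^sup>2 \<partial>M))"
    by (simp add: Y_def power2_eq_square mult.commute)
  finally show "(\<integral>\<omega>. (\<Sum>l\<in>S. y l (X1 \<omega>) * z l (X2 \<omega>))\<^sup>2 \<partial>M) = (\<Sum>l\<in>S. v l * (\<integral>\<omega>. (y l (X1 \<omega>))\<^sup>2 \<partial>M))" .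
qed

text \<open>Without square integrability of the coefficients the left side may be infinite; the bound
  then holds because some term on the right is infinite, which needs \<open>v l > 0\<close>.\<close>

lemma (in prob_space) nn_integral_square_bilinear_indep_le:
  fixes y :: "'l \<Rightarrow> 'b \<Rightarrow> real" and z :: "'l \<Rightarrow> 'b \<Rightarrow> real"
  assumes ind: "indep_var N1 X1 N2 X2" and S: "finite S"
    and y: "\<And>l. l \<in> S \<Longrightarrow> y l \<in> borel_measurable N1"
    and z: "\<And>l. l \<in> S \<Longrightarrow> z l \<in> borel_measurable N2"
    and zsq: "\<And>l. l \<in> S \<Longrightarrow> integrable M (\<lambda>\<omega>. (z l (X2 \<omega>))\<^sup>2)"
    and zcov: "\<And>l l'. l \<in> S \<Longrightarrow> l' \<in> S \<Longrightarrow>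
      (\<integral>\<omega>. z l (X2 \<omega>) * z l' (X2 \<omega>) \<partial>M) = (if l = l' then v l else 0)"
    and v: "\<And>l. l \<in> S \<Longrightarrow> 0 < v l"
  shows "(\<integral>\<^sup>+\<omega>. ennreal ((\<Sum>l\<in>S. y l (X1 \<omega>) * z l (X2 \<omega>))\<^sup>2) \<partial>M)
     \<le> (\<Sum>l\<in>S. ennreal (v l) * (\<integral>\<^sup>+\<omega>. ennreal ((y l (X1 \<omega>))\<^sup>2) \<partial>M))"
proof (cases "\<exists>l\<in>S. (\<integral>\<^sup>+\<omega>. ennreal ((y l (X1 \<omega>))\<^sup>2) \<partial>M) = \<infinity>")
  case True
  then obtain l where l: "l \<in> S" "(\<integral>\<^sup>+\<omega>. ennreal ((y l (X1 \<omega>))\<^sup>2) \<partial>M) = \<infinity>" by blast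
  have "\<infinity> = ennreal (v l) * (\<integral>\<^sup>+\<omega>. ennreal ((y l (X1 \<omega>))\<^sup>2) \<partial>M)"
    using l v[OF l(1)] by (simp add: ennreal_mult_top)
  also have "\<dots> \<le> (\<Sum>l\<in>S. ennreal (v l) * (\<integral>\<^sup>+\<omega>. ennreal ((y l (X1 \<omega>))\<^sup>2) \<partial>M))"
    using S l by (intro member_le_sum) auto
  finally show ?thesis by (simp add: top_unique)
next
  case False
  have [measurable]: "X1 \<in> measurable M N1" using ind by (rule indep_var_rv1)
  have ysq: "integrable M (\<lambda>\<omega>. (y l (X1 \<omega>))\<^sup>2)" if l: "l \<in> S" for l
  proof (rule integrableI_nonneg)
    show "(\<lambda>\<omega>. (y l (X1 \<omega>))\<^sup>2) \<in> borel_measurable M"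
      using y[OF l] by measurable
  qed (use False l in \<open>auto simp: less_top\<close>)
  note bilinear = integral_square_bilinear_indep[OF ind S y z ysq zsq zcov]
  have "(\<integral>\<^sup>+\<omega>. ennreal ((\<Sum>l\<in>S. y l (X1 \<omega>) * z l (X2 \<omega>))\<^sup>2) \<partial>M)
      = ennreal (\<Sum>l\<in>S. v l * (\<integral>\<omega>. (y l (X1 \<omega>))\<^sup>2 \<partial>M))"
    using bilinear by (simp add: nn_integral_eq_integral)
  also have "\<dots> = (\<Sum>l\<in>S. ennreal (v l) * ennreal (\<integral>\<omega>. (y l (X1 \<omega>))\<^sup>2 \<partial>M))"
    using v by (simp add: sum_ennreal[symmetric] ennreal_mult less_imp_le)
  also have "\<dots> = (\<Sum>l\<in>S. ennreal (v l) * (\<integral>\<^sup>+\<omega>. ennreal ((y l (X1 \<omega>))\<^sup>2) \<partial>M))"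
    using ysq by (simp add: nn_integral_eq_integral)
  finally show ?thesis by simp
qed

lemma (in prob_space) nn_integral_sum_square_bilinear_indep_le:
  fixes y :: "'l \<Rightarrow> 'j \<Rightarrow> 'b \<Rightarrow> real" and z :: "'l \<Rightarrow> 'b \<Rightarrow> real"
  assumes ind: "indep_var N1 X1 N2 X2" and S: "finite S"
    and y: "\<And>l j. l \<in> S \<Longrightarrow> y l j \<in> borel_measurable N1"
    and z: "\<And>l. l \<in> S \<Longrightarrow> z l \<in> borel_measurable N2"
    and zsq: "\<And>l. l \<in> S \<Longrightarrow> integrable M (\<lambda>\<omega>. (z l (X2 \<omega>))\<^sup>2)"
    and zcov: "\<And>l l'. l \<in> S \<Longrightarrow> l' \<in> S \<Longrightarrow>
      (\<integral>\<omega>. z l (X2 \<omega>) * z l' (X2 \<omega>) \<partial>M) = (if l = l' then v l else 0)"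
    and v: "\<And>l. l \<in> S \<Longrightarrow> 0 < v l"
  shows "(\<integral>\<^sup>+\<omega>. ennreal (\<Sum>j\<in>J. (\<Sum>l\<in>S. y l j (X1 \<omega>) * z l (X2 \<omega>))\<^sup>2) \<partial>M)
     \<le> (\<Sum>l\<in>S. ennreal (v l) * (\<integral>\<^sup>+\<omega>. ennreal (\<Sum>j\<in>J. (y l j (X1 \<omega>))\<^sup>2) \<partial>M))"
proof -
  have X1: "X1 \<in> measurable M N1" and X2: "X2 \<in> measurable M N2"
    using ind by (rule indep_var_rv1, rule indep_var_rv2)
  have y_sq: "(\<lambda>\<omega>. ennreal ((y l j (X1 \<omega>))\<^sup>2)) \<in> borel_measurable M" if "l \<in> S" for l j
  proof -
    note [measurable] = measurable_compose[OF X1 y[OF that]]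
    show ?thesis by measurable
  qed
  have sum_sq: "(\<lambda>\<omega>. ennreal ((\<Sum>l\<in>S. y l j (X1 \<omega>) * z l (X2 \<omega>))\<^sup>2)) \<in> borel_measurable M" for j
  proof -
    have [measurable]: "(\<lambda>\<omega>. \<Sum>l\<in>S. y l j (X1 \<omega>) * z l (X2 \<omega>)) \<in> borel_measurable M"
      by (intro borel_measurable_sum borel_measurable_times measurable_compose[OF X1 y]
          measurable_compose[OF X2 z])
    show ?thesis by measurable
  qed
  have "(\<integral>\<^sup>+\<omega>. ennreal (\<Sum>j\<in>J. (\<Sum>l\<in>S. y l j (X1 \<omega>) * z l (X2 \<omega>))\<^sup>2) \<partial>M)
      = (\<integral>\<^sup>+\<omega>. (\<Sum>j\<in>J. ennreal ((\<Sum>l\<in>S. y l j (X1 \<omega>) * z l (X2 \<omega>))\<^sup>2)) \<partial>M)"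
    by (intro nn_integral_cong) (simp add: sum_ennreal)
  also have "\<dots> = (\<Sum>j\<in>J. \<integral>\<^sup>+\<omega>. ennreal ((\<Sum>l\<in>S. y l j (X1 \<omega>) * z l (X2 \<omega>))\<^sup>2) \<partial>M)"
    by (rule nn_integral_sum[OF sum_sq])
  also have "\<dots> \<le> (\<Sum>j\<in>J. \<Sum>l\<in>S. ennreal (v l) * (\<integral>\<^sup>+\<omega>. ennreal ((y l j (X1 \<omega>))\<^sup>2) \<partial>M))"
    by (intro sum_mono nn_integral_square_bilinear_indep_le[OF ind S _ z zsq zcov v] y)
  also have "\<dots> = (\<Sum>l\<in>S. ennreal (v l) * (\<Sum>j\<in>J. \<integral>\<^sup>+\<omega>. ennreal ((y l j (X1 \<omega>))\<^sup>2) \<partial>M))"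
    by (subst sum.swap) (simp add: sum_distrib_left)
  also have "\<dots> = (\<Sum>l\<in>S. ennreal (v l) * (\<integral>\<^sup>+\<omega>. ennreal (\<Sum>j\<in>J. (y l j (X1 \<omega>))\<^sup>2) \<partial>M))"
    by (intro sum.cong refl) (simp add: nn_integral_sum[OF y_sq, symmetric] sum_ennreal)
  finally show ?thesis .
qed

lemma borel_measurable_vec_lambda:
  fixes f :: "'a \<Rightarrow> 'n::finite \<Rightarrow> real"
  assumes "\<And>j. (\<lambda>x. f x j) \<in> borel_measurable M"
  shows "(\<lambda>x. \<chi> j. f x j) \<in> borel_measurable M"
proof -
  have "(\<chi> j. f x j) = (\<Sum>j\<in>UNIV. f x j *\<^sub>R axis j 1)" for x
    using basis_expansion[of "\<chi> j. f x j"] by (simp add: scalar_mult_eq_scaleR)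
  then show ?thesis
    using assms by (simp add: borel_measurable_sum borel_measurable_scaleR)
qed

lemma borel_measurable_vec_nth:
  fixes f :: "'a \<Rightarrow> real ^ 'n::finite"
  assumes "f \<in> borel_measurable M"
  shows "(\<lambda>x. f x $ j) \<in> borel_measurable M"
proof -
  have "(\<lambda>x. f x $ j) = (\<lambda>x. f x \<bullet> axis j 1)" by (simp add: inner_axis)
  then show ?thesis using borel_measurable_inner[OF assms borel_measurable_const] by metis
qed

lemma has_field_derivative_sequentially:
  fixes \<phi> :: "real \<Rightarrow> real"
  assumes "(\<phi> has_field_derivative D) (at z)"
  shows "(\<lambda>n. (\<phi> (z + inverse (real (Suc n))) - \<phi> z) / inverse (real (Suc n))) \<longlonglongrightarrow> D"
proof -
  have "((\<lambda>y. (\<phi> y - \<phi> z) / (y - z)) \<longlongrightarrow> D) (at z)"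
    using assms by (simp add: has_field_derivative_iff)
  moreover have "filterlim (\<lambda>n. z + inverse (real (Suc n))) (at z) sequentially"
    using tendsto_add[OF tendsto_const LIMSEQ_inverse_real_of_nat, of z]
    by (intro filterlim_atI) auto
  ultimately show ?thesis
    by (auto dest: filterlim_compose)
qed

lemma borel_measurable_deriv:
  fixes f :: "real \<Rightarrow> real"
  assumes f: "\<And>z. f differentiable (at z)"
  shows "deriv f \<in> borel_measurable borel"
proof (rule borel_measurable_LIMSEQ_real)
  show "(\<lambda>n. (f (z + inverse (real (Suc n))) - f z) / inverse (real (Suc n))) \<longlonglongrightarrow> deriv f z" for z
    using f by (intro has_field_derivative_sequentially) (simp add: DERIV_deriv_iff_real_differentiable)
  have "continuous_on UNIV f"
    using f by (meson continuous_at_imp_continuous_on differentiable_imp_continuous_within)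
  then have [measurable]: "f \<in> borel_measurable borel" by (rule borel_measurable_continuous_onI)
  show "(\<lambda>z. (f (z + inverse (real (Suc n))) - f z) / inverse (real (Suc n))) \<in> borel_measurable borel" for n
    by measurable
qed

lemma borel_measurable_gradient:
  fixes F :: "'v::euclidean_space \<Rightarrow> real"
  assumes F: "\<And>x. (F has_derivative (\<lambda>h. gF x \<bullet> h)) (at x)"
  shows "gF \<in> borel_measurable borel"
proof (rule borel_measurable_euclidean_space[THEN iffD2, rule_format])
  fix v :: 'v
  have "continuous_on UNIV F"
    by (intro continuous_at_imp_continuous_on ballI has_derivative_continuous[OF F])
  then have [measurable]: "F \<in> borel_measurable borel" by (rule borel_measurable_continuous_onI)
  show "(\<lambda>x. gF x \<bullet> v) \<in> borel_measurable borel"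
  proof (rule borel_measurable_LIMSEQ_real)
    fix x
    have line: "((\<lambda>h. x + h *\<^sub>R v) has_derivative (\<lambda>h. h *\<^sub>R v)) (at 0)"
      by (auto intro!: derivative_eq_intros)
    have "((F \<circ> (\<lambda>h. x + h *\<^sub>R v)) has_derivative ((\<lambda>h. gF x \<bullet> h) \<circ> (\<lambda>h. h *\<^sub>R v))) (at 0)"
      using diff_chain_at[OF line, of F] F[of x] by simp
    then have "((\<lambda>h. F (x + h *\<^sub>R v)) has_derivative (\<lambda>h. h * (gF x \<bullet> v))) (at 0)"
      by (simp add: comp_def)
    then have "((\<lambda>h. F (x + h *\<^sub>R v)) has_field_derivative gF x \<bullet> v) (at 0)"
      by (rule has_derivative_imp_has_field_derivative) simp
    from has_field_derivative_sequentially[OF this]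
    show "(\<lambda>n. (F (x + inverse (real (Suc n)) *\<^sub>R v) - F x) / inverse (real (Suc n))) \<longlonglongrightarrow> gF x \<bullet> v"
      by simp
  next
    show "(\<lambda>x. (F (x + inverse (real (Suc n)) *\<^sub>R v) - F x) / inverse (real (Suc n))) \<in> borel_measurable borel" for n
      by measurable
  qed
qed

lemma norm_sq_eq_sum_blocks:
  fixes v :: "real ^ 'n::finite" and blk :: "'n \<Rightarrow> nat"
  assumes "\<And>j. blk j < K"
  shows "(norm v)\<^sup>2 = (\<Sum>k<K. \<Sum>j | blk j = k. (v $ j)\<^sup>2)"
proof -
  have "(norm v)\<^sup>2 = (\<Sum>j\<in>UNIV. (v $ j)\<^sup>2)"
    unfolding power2_norm_eq_inner inner_vec_def by (simp add: power2_eq_square)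
  also have "\<dots> = (\<Sum>k<K. \<Sum>j | blk j = k. (v $ j)\<^sup>2)"
  proof -
    have "blk ` UNIV \<subseteq> {..<K}" using assms by auto
    then show ?thesis using sum.group[of UNIV "{..<K}" blk "\<lambda>j. (v $ j)\<^sup>2"] by simp
  qed
  finally show ?thesis .
qed

lemma sum_sq_components_le_norm_sq:
  fixes v :: "real ^ 'n::finite"
  shows "(\<Sum>j\<in>J. (v $ j)\<^sup>2) \<le> (norm v)\<^sup>2"
proof -
  have "(norm v)\<^sup>2 = (\<Sum>j\<in>UNIV. (v $ j)\<^sup>2)"
    unfolding power2_norm_eq_inner inner_vec_def by (simp add: power2_eq_square)
  then show ?thesis by (simp add: sum_mono2)
qed

lemma sum_nn_integral_cmult:
  fixes f :: "'i \<Rightarrow> 'a \<Rightarrow> real"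
  assumes I: "finite I" and f: "\<And>i. i \<in> I \<Longrightarrow> f i \<in> borel_measurable M"
    and nonneg: "\<And>i \<omega>. i \<in> I \<Longrightarrow> 0 \<le> f i \<omega>" and c: "0 \<le> c"
  shows "(\<Sum>i\<in>I. \<integral>\<^sup>+\<omega>. ennreal (c * f i \<omega>) \<partial>M) = ennreal c * (\<integral>\<^sup>+\<omega>. ennreal (\<Sum>i\<in>I. f i \<omega>) \<partial>M)"
proof -
  have "(\<Sum>i\<in>I. \<integral>\<^sup>+\<omega>. ennreal (c * f i \<omega>) \<partial>M) = (\<Sum>i\<in>I. ennreal c * \<integral>\<^sup>+\<omega>. ennreal (f i \<omega>) \<partial>M)"
    using f nonneg c by (intro sum.cong refl) (simp add: ennreal_mult nn_integral_cmult)
  also have "\<dots> = ennreal c * (\<integral>\<^sup>+\<omega>. (\<Sum>i\<in>I. ennreal (f i \<omega>)) \<partial>M)"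
    using f by (simp add: sum_distrib_left nn_integral_sum)
  also have "(\<integral>\<^sup>+\<omega>. (\<Sum>i\<in>I. ennreal (f i \<omega>)) \<partial>M) = (\<integral>\<^sup>+\<omega>. ennreal (\<Sum>i\<in>I. f i \<omega>) \<partial>M)"
    using nonneg by (intro nn_integral_cong) (simp add: sum_ennreal)
  finally show ?thesis .
qed

lemma (in prob_space) nn_integral_le_const_plus_sum:
  assumes bound: "\<And>\<omega>. X \<omega> \<le> c + (\<Sum>t\<in>I. a t * Y t \<omega>)"
    and c: "0 \<le> c" and a: "\<And>t. 0 \<le> a t"
    and Y: "\<And>t. Y t \<in> borel_measurable M" and Y_nonneg: "\<And>t \<omega>. 0 \<le> Y t \<omega>"
  shows "(\<integral>\<^sup>+\<omega>. ennreal (X \<omega>) \<partial>M) \<le> ennreal c + (\<Sum>t\<in>I. ennreal (a t) * (\<integral>\<^sup>+\<omega>. ennreal (Y t \<omega>) \<partial>M))"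
proof -
  have "(\<integral>\<^sup>+\<omega>. ennreal (X \<omega>) \<partial>M) \<le> (\<integral>\<^sup>+\<omega>. ennreal c + (\<Sum>t\<in>I. ennreal (a t) * ennreal (Y t \<omega>)) \<partial>M)"
  proof (intro nn_integral_mono)
    fix \<omega>
    have "ennreal (X \<omega>) \<le> ennreal (c + (\<Sum>t\<in>I. a t * Y t \<omega>))"
      by (rule ennreal_leI[OF bound])
    also have "\<dots> = ennreal c + (\<Sum>t\<in>I. ennreal (a t) * ennreal (Y t \<omega>))"
      using c a Y_nonneg
      by (simp add: ennreal_plus sum_nonneg sum_ennreal[symmetric] ennreal_mult del: sum_ennreal)
    finally show "ennreal (X \<omega>) \<le> ennreal c + (\<Sum>t\<in>I. ennreal (a t) * ennreal (Y t \<omega>))" .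
  qed
  also have "\<dots> = ennreal c + (\<Sum>t\<in>I. ennreal (a t) * (\<integral>\<^sup>+\<omega>. ennreal (Y t \<omega>) \<partial>M))"
    using Y by (simp add: nn_integral_add nn_integral_sum nn_integral_cmult emeasure_space_1)
  finally show ?thesis .
qed

lemma ennreal_mult_mult_le:
  assumes "0 \<le> a" "0 \<le> b" "0 \<le> c" "0 \<le> d" and "a * b \<le> c * d"
  shows "ennreal a * (ennreal b * x) \<le> ennreal c * (ennreal d * x)"
proof -
  have "ennreal a * (ennreal b * x) = ennreal (a * b) * x"
    using assms by (simp add: ennreal_mult mult.assoc)
  also have "\<dots> \<le> ennreal (c * d) * x"
    using assms by (intro mult_right_mono ennreal_leI) auto
  also have "\<dots> = ennreal c * (ennreal d * x)"
    using assms by (simp add: ennreal_mult mult.assoc)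
  finally show ?thesis .
qed

section \<open>The noisy block-coordinate iteration\<close>

text \<open>The aggregated gradient error \<open>e\<^sup>(\<^sup>t\<^sup>)\<close> of the paper at the point \<open>u\<close>, for realisations
  \<open>a i\<close> of the uplink noise and \<open>b k i\<close> of the downlink noise; \<open>dG i\<close> plays the role of \<open>G\<^sub>i'\<close>.\<close>

definition gradient_noise :: "nat \<Rightarrow> ('n::finite \<Rightarrow> nat) \<Rightarrow> (nat \<Rightarrow> real \<Rightarrow> real) \<Rightarrow> (nat \<Rightarrow> real ^ 'n \<Rightarrow> real)
    \<Rightarrow> (nat \<Rightarrow> nat \<Rightarrow> real ^ 'n \<Rightarrow> real ^ 'n) \<Rightarrow> real ^ 'n \<Rightarrow> (nat \<Rightarrow> real) \<Rightarrow> (nat \<Rightarrow> nat \<Rightarrow> real)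
    \<Rightarrow> real ^ 'n" where
  "gradient_noise L blk dG s dg u a b =
     (\<chi> j. (1 / real L) * (\<Sum>i<L. (dG i (s i u) * a i + b (blk j) i) * dg (blk j) i u $ j))"

lemma gradient_noise_measurable:
  assumes u: "u \<in> borel_measurable N"
    and dG: "\<And>i. i < L \<Longrightarrow> dG i \<in> borel_measurable borel"
    and s: "\<And>i. i < L \<Longrightarrow> s i \<in> borel_measurable borel"
    and dg: "\<And>k i. k < K \<Longrightarrow> i < L \<Longrightarrow> dg k i \<in> borel_measurable borel"
    and blk: "\<And>j. blk j < K"
    and a: "\<And>i. i < L \<Longrightarrow> a i \<in> borel_measurable N"
    and b: "\<And>k i. k < K \<Longrightarrow> i < L \<Longrightarrow> b k i \<in> borel_measurable N"
  shows "(\<lambda>x. gradient_noise L blk dG s dg (u x) (\<lambda>i. a i x) (\<lambda>k i. b k i x)) \<in> borel_measurable N"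
proof -
  have summand: "(\<lambda>x. (dG i (s i (u x)) * a i x + b (blk j) i x) * dg (blk j) i (u x) $ j) \<in> borel_measurable N"
    if i: "i < L" for i j
  proof -
    have "(\<lambda>x. dG i (s i (u x))) \<in> borel_measurable N"
      using measurable_compose[OF measurable_compose[OF u s[OF i]] dG[OF i]] .
    moreover have "(\<lambda>x. dg (blk j) i (u x) $ j) \<in> borel_measurable N"
      by (rule borel_measurable_vec_nth[OF measurable_compose[OF u dg[OF blk i]]])
    ultimately show ?thesis
      by (intro borel_measurable_times borel_measurable_add a[OF i] b[OF blk i])
  qed
  show ?thesis
    unfolding gradient_noise_def using summand
    by (intro borel_measurable_vec_lambda borel_measurable_times[OF borel_measurable_const]
        borel_measurable_sum) simp
qed

lemma gradient_noise_cong: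
  assumes "\<And>i. i < L \<Longrightarrow> a i = a' i" and "\<And>k i. k < K \<Longrightarrow> i < L \<Longrightarrow> b k i = b' k i"
    and "\<And>j. blk j < K"
  shows "gradient_noise L blk dG s dg u a b = gradient_noise L blk dG s dg u a' b'"
  unfolding gradient_noise_def using assms by (intro arg_cong[where f = vec_lambda] ext sum.cong) auto

fun noise_round :: "noise_idx \<Rightarrow> nat" where
  "noise_round (NUL t i) = t"
| "noise_round (NDL t k i) = t"

fun noise_variance :: "(nat \<Rightarrow> real) \<Rightarrow> (nat \<Rightarrow> nat \<Rightarrow> real) \<Rightarrow> noise_idx \<Rightarrow> real" where
  "noise_variance vUL vDL (NUL t i) = vUL t"
| "noise_variance vUL vDL (NDL t k i) = vDL k t"

locale noisy_vfl_iteration = prob_space M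
  for M :: "'a measure" +
  fixes K L :: nat and blk :: "'n::finite \<Rightarrow> nat"
    and dG :: "nat \<Rightarrow> real \<Rightarrow> real" and s :: "nat \<Rightarrow> real ^ 'n \<Rightarrow> real"
    and dg :: "nat \<Rightarrow> nat \<Rightarrow> real ^ 'n \<Rightarrow> real ^ 'n"
    and gradF :: "real ^ 'n \<Rightarrow> real ^ 'n" and \<beta> :: real and w0 :: "real ^ 'n"
    and nUL :: "nat \<Rightarrow> nat \<Rightarrow> 'a \<Rightarrow> real" and nDL :: "nat \<Rightarrow> nat \<Rightarrow> nat \<Rightarrow> 'a \<Rightarrow> real"
    and vUL :: "nat \<Rightarrow> real" and vDL :: "nat \<Rightarrow> nat \<Rightarrow> real"
    and w :: "nat \<Rightarrow> 'a \<Rightarrow> real ^ 'n"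
  assumes blk_range: "\<And>j. blk j < K"
    and dG_measurable: "\<And>i. i < L \<Longrightarrow> dG i \<in> borel_measurable borel"
    and s_measurable: "\<And>i. i < L \<Longrightarrow> s i \<in> borel_measurable borel"
    and dg_measurable: "\<And>k i. k < K \<Longrightarrow> i < L \<Longrightarrow> dg k i \<in> borel_measurable borel"
    and gradF_measurable: "gradF \<in> borel_measurable borel"
    and noise_gaussian: "\<And>l. l \<in> noise_index_set K L \<Longrightarrow>
      gaussian_rv M (noise_family nUL nDL l) (noise_variance vUL vDL l)"
    and noise_indep: "indep_vars (\<lambda>_. borel) (noise_family nUL nDL) (noise_index_set K L)"
    and w_0: "\<And>\<omega>. w 0 \<omega> = w0"
    and w_Suc: "\<And>t \<omega>. w (Suc t) \<omega> = w t \<omega> - (1 / \<beta>) *\<^sub>R (gradF (w t \<omega>) +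
      gradient_noise L blk dG s dg (w t \<omega>) (\<lambda>i. nUL t i \<omega>) (\<lambda>k i. nDL t k i \<omega>))"
begin

abbreviation "nf \<equiv> noise_family nUL nDL"

definition noise :: "nat \<Rightarrow> 'a \<Rightarrow> real ^ 'n" where
  "noise t \<omega> = gradient_noise L blk dG s dg (w t \<omega>) (\<lambda>i. nUL t i \<omega>) (\<lambda>k i. nDL t k i \<omega>)"

definition past_noise :: "nat \<Rightarrow> noise_idx set" where
  "past_noise t = {l \<in> noise_index_set K L. noise_round l < t}"

definition round_noise :: "nat \<Rightarrow> noise_idx set" where
  "round_noise t = {l \<in> noise_index_set K L. noise_round l = t}"

definition block_noise :: "nat \<Rightarrow> nat \<Rightarrow> noise_idx set" where
  "block_noise t k = NUL t ` {..<L} \<union> NDL t k ` {..<L}"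

text \<open>Running the iteration on a fixed noise realisation makes explicit that \<open>w\<^sup>(\<^sup>t\<^sup>)\<close> depends only
  on the noise of earlier rounds.\<close>

primrec iterate_on_noise :: "nat \<Rightarrow> (noise_idx \<Rightarrow> real) \<Rightarrow> real ^ 'n" where
  "iterate_on_noise 0 x = w0"
| "iterate_on_noise (Suc t) x = iterate_on_noise t x - (1 / \<beta>) *\<^sub>R (gradF (iterate_on_noise t x) +
     gradient_noise L blk dG s dg (iterate_on_noise t x) (\<lambda>i. x (NUL t i)) (\<lambda>k i. x (NDL t k i)))"

lemma NUL_mem_past_round: "i < L \<Longrightarrow> NUL t i \<in> past_noise (Suc t) \<and> NUL t i \<in> round_noise t"
  by (auto simp: past_noise_def round_noise_def noise_index_set_def)

lemma NDL_mem_past_round: "k < K \<Longrightarrow> i < L \<Longrightarrow> NDL t k i \<in> past_noise (Suc t) \<and> NDL t k i \<in> round_noise t"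
  by (auto simp: past_noise_def round_noise_def noise_index_set_def)

lemma block_noise_subset: "k < K \<Longrightarrow> block_noise t k \<subseteq> round_noise t"
  using NUL_mem_past_round NDL_mem_past_round by (auto simp: block_noise_def)

lemma sum_block_noise:
  "(\<Sum>l\<in>block_noise t k. h l) = (\<Sum>i<L. h (NUL t i)) + (\<Sum>i<L. h (NDL t k i))"
proof -
  have "NUL t ` {..<L} \<inter> NDL t k ` {..<L} = {}" by auto
  moreover have "inj_on (NUL t) {..<L}" "inj_on (NDL t k) {..<L}" by (auto simp: inj_on_def)
  ultimately show ?thesis
    unfolding block_noise_def by (simp add: sum.union_disjoint sum.reindex)
qed

lemma iterate_on_noise_past:
  "(\<And>l. l \<in> past_noise t \<Longrightarrow> x l = x' l) \<Longrightarrow> iterate_on_noise t x = iterate_on_noise t x'"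
proof (induction t)
  case 0
  then show ?case by simp
next
  case (Suc t)
  have "past_noise t \<subseteq> past_noise (Suc t)" by (auto simp: past_noise_def)
  then have "iterate_on_noise t x = iterate_on_noise t x'" using Suc by blast
  moreover have "gradient_noise L blk dG s dg (iterate_on_noise t x) (\<lambda>i. x (NUL t i)) (\<lambda>k i. x (NDL t k i))
      = gradient_noise L blk dG s dg (iterate_on_noise t x) (\<lambda>i. x' (NUL t i)) (\<lambda>k i. x' (NDL t k i))"
    using Suc.prems NUL_mem_past_round NDL_mem_past_round blk_range by (intro gradient_noise_cong[where K = K]) auto
  ultimately show ?case by simp
qed

lemma iterate_on_noise_measurable:
  "past_noise t \<subseteq> I \<Longrightarrow> iterate_on_noise t \<in> borel_measurable (PiM I (\<lambda>_. borel))"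
proof (induction t)
  case 0
  then show ?case by simp
next
  case (Suc t)
  have "past_noise t \<subseteq> past_noise (Suc t)" by (auto simp: past_noise_def)
  then have W: "iterate_on_noise t \<in> borel_measurable (PiM I (\<lambda>_. borel))" using Suc by blast
  have "(\<lambda>x. gradient_noise L blk dG s dg (iterate_on_noise t x) (\<lambda>i. x (NUL t i)) (\<lambda>k i. x (NDL t k i)))
      \<in> borel_measurable (PiM I (\<lambda>_. borel))"
    using Suc.prems NUL_mem_past_round NDL_mem_past_round
    by (intro gradient_noise_measurable[where K = K, OF W] dG_measurable s_measurable dg_measurable blk_range
        measurable_component_singleton) auto
  with W show ?case
    by (simp add: borel_measurable_diff borel_measurable_scaleR borel_measurable_add
        measurable_compose[OF W gradF_measurable])
qed

lemma w_eq_iterate_on_past_noise: "w t \<omega> = iterate_on_noise t (restrict (\<lambda>l. nf l \<omega>) (past_noise t))"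
proof -
  have "w t \<omega> = iterate_on_noise t (\<lambda>l. nf l \<omega>)"
    by (induction t) (simp_all add: w_0 w_Suc)
  also have "\<dots> = iterate_on_noise t (restrict (\<lambda>l. nf l \<omega>) (past_noise t))"
    by (rule iterate_on_noise_past) simp
  finally show ?thesis .
qed

lemma indep_past_round_noise:
  "indep_var (PiM (past_noise t) (\<lambda>_. borel)) (\<lambda>\<omega>. restrict (\<lambda>l. nf l \<omega>) (past_noise t))
     (PiM (round_noise t) (\<lambda>_. borel)) (\<lambda>\<omega>. restrict (\<lambda>l. nf l \<omega>) (round_noise t))"
  by (rule indep_var_restrict[OF noise_indep]) (auto simp: past_noise_def round_noise_def)

lemma w_measurable: "w t \<in> borel_measurable M"
proof -
  have "(\<lambda>\<omega>. restrict (\<lambda>l. nf l \<omega>) (past_noise t)) \<in> measurable M (PiM (past_noise t) (\<lambda>_. borel))"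
    using indep_past_round_noise by (rule indep_var_rv1)
  from measurable_compose[OF this iterate_on_noise_measurable[OF order_refl]]
  show ?thesis by (simp add: w_eq_iterate_on_past_noise[abs_def])
qed

lemma nUL_measurable: "i < L \<Longrightarrow> nUL t i \<in> borel_measurable M"
  using gaussian_rv_measurable[OF prob_space_axioms noise_gaussian[of "NUL t i"]]
  by (simp add: noise_index_set_def)

lemma nDL_measurable: "k < K \<Longrightarrow> i < L \<Longrightarrow> nDL t k i \<in> borel_measurable M"
  using gaussian_rv_measurable[OF prob_space_axioms noise_gaussian[of "NDL t k i"]]
  by (simp add: noise_index_set_def)

lemma noise_measurable: "noise t \<in> borel_measurable M"
  unfolding noise_def[abs_def]
  by (intro gradient_noise_measurable[where K = K, OF w_measurable] dG_measurable s_measurable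
      dg_measurable blk_range nUL_measurable nDL_measurable)

fun noise_coeff :: "nat \<Rightarrow> 'n \<Rightarrow> real ^ 'n \<Rightarrow> noise_idx \<Rightarrow> real" where
  "noise_coeff k j u (NUL t i) = dG i (s i u) * dg k i u $ j / real L"
| "noise_coeff k j u (NDL t k' i) = dg k i u $ j / real L"
    \<comment> \<open>only used on \<open>block_noise t k\<close>, where \<open>k' = k\<close>\<close>

lemma noise_component_eq_sum:
  assumes "blk j = k"
  shows "noise t \<omega> $ j = (\<Sum>l\<in>block_noise t k. noise_coeff k j (w t \<omega>) l * nf l \<omega>)"
proof -
  have "(\<Sum>l\<in>block_noise t k. noise_coeff k j (w t \<omega>) l * nf l \<omega>)
      = (\<Sum>i<L. dG i (s i (w t \<omega>)) * dg k i (w t \<omega>) $ j / real L * nUL t i \<omega>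
          + dg k i (w t \<omega>) $ j / real L * nDL t k i \<omega>)"
    by (simp add: sum_block_noise sum.distrib)
  also have "\<dots> = noise t \<omega> $ j"
    using assms by (simp add: noise_def gradient_noise_def sum_distrib_left field_simps)
  finally show ?thesis by simp
qed

lemma noise_coeff_measurable:
  assumes k: "k < K" and l: "l \<in> block_noise t k"
  shows "(\<lambda>x. noise_coeff k j (iterate_on_noise t x) l) \<in> borel_measurable (PiM (past_noise t) (\<lambda>_. borel))"
proof -
  note W = iterate_on_noise_measurable[OF order_refl, of t]
  from l obtain i where i: "i < L" and "l = NUL t i \<or> l = NDL t k i"
    by (auto simp: block_noise_def)
  moreover have "(\<lambda>x. dG i (s i (iterate_on_noise t x))) \<in> borel_measurable (PiM (past_noise t) (\<lambda>_. borel))"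
    using measurable_compose[OF measurable_compose[OF W s_measurable[OF i]] dG_measurable[OF i]] .
  moreover have "(\<lambda>x. dg k i (iterate_on_noise t x) $ j) \<in> borel_measurable (PiM (past_noise t) (\<lambda>_. borel))"
    by (rule borel_measurable_vec_nth[OF measurable_compose[OF W dg_measurable[OF k i]]])
  ultimately show ?thesis by auto
qed

lemma block_second_moment_le:
  assumes k: "k < K"
  shows "(\<integral>\<^sup>+\<omega>. ennreal (\<Sum>j | blk j = k. (noise t \<omega> $ j)\<^sup>2) \<partial>M)
    \<le> (\<Sum>l\<in>block_noise t k. ennreal (noise_variance vUL vDL l) *
          (\<integral>\<^sup>+\<omega>. ennreal (\<Sum>j | blk j = k. (noise_coeff k j (w t \<omega>) l)\<^sup>2) \<partial>M))"
proof -
  let ?past = "\<lambda>\<omega>. restrict (\<lambda>l. nf l \<omega>) (past_noise t)"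
  let ?now = "\<lambda>\<omega>. restrict (\<lambda>l. nf l \<omega>) (round_noise t)"
  have l_now: "l \<in> round_noise t" and l_idx: "l \<in> noise_index_set K L" if "l \<in> block_noise t k" for l
    using block_noise_subset[OF k] that by (auto simp: round_noise_def)
  have "(\<integral>\<^sup>+\<omega>. ennreal (\<Sum>j | blk j = k. (noise t \<omega> $ j)\<^sup>2) \<partial>M)
      = (\<integral>\<^sup>+\<omega>. ennreal (\<Sum>j | blk j = k.
          (\<Sum>l\<in>block_noise t k. noise_coeff k j (iterate_on_noise t (?past \<omega>)) l * (\<lambda>x. x l) (?now \<omega>))\<^sup>2) \<partial>M)"
    using l_now by (intro nn_integral_cong sum.cong refl arg_cong[where f = "\<lambda>x. x\<^sup>2"])
      (simp add: noise_component_eq_sum w_eq_iterate_on_past_noise[symmetric])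
  also have "\<dots> \<le> (\<Sum>l\<in>block_noise t k. ennreal (noise_variance vUL vDL l) *
      (\<integral>\<^sup>+\<omega>. ennreal (\<Sum>j | blk j = k. (noise_coeff k j (iterate_on_noise t (?past \<omega>)) l)\<^sup>2) \<partial>M))"
  proof (rule nn_integral_sum_square_bilinear_indep_le[OF indep_past_round_noise])
    show "finite (block_noise t k)" by (simp add: block_noise_def)
    show "(\<lambda>x. noise_coeff k j (iterate_on_noise t x) l) \<in> borel_measurable (PiM (past_noise t) (\<lambda>_. borel))"
      if "l \<in> block_noise t k" for l j
      using noise_coeff_measurable[OF k that] .
    show "(\<lambda>x. x l) \<in> borel_measurable (PiM (round_noise t) (\<lambda>_. borel))" if "l \<in> block_noise t k" for l
      using l_now[OF that] by (rule measurable_component_singleton)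
    show "integrable M (\<lambda>\<omega>. ((\<lambda>x. x l) (?now \<omega>))\<^sup>2)" if "l \<in> block_noise t k" for l
      using gaussian_rv_square_integrable[OF prob_space_axioms noise_gaussian[OF l_idx[OF that]]]
        l_now[OF that] by simp
    show "(\<integral>\<omega>. (\<lambda>x. x l) (?now \<omega>) * (\<lambda>x. x l') (?now \<omega>) \<partial>M)
        = (if l = l' then noise_variance vUL vDL l else 0)"
      if "l \<in> block_noise t k" "l' \<in> block_noise t k" for l l'
      using indep_gaussians_uncorrelated[OF noise_indep noise_gaussian l_idx[OF that(1)] l_idx[OF that(2)]]
        l_now[OF that(1)] l_now[OF that(2)] by simp
    show "0 < noise_variance vUL vDL l" if "l \<in> block_noise t k" for l
      using noise_gaussian[OF l_idx[OF that]] by (simp add: gaussian_rv_def)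
  qed
  also have "\<dots> = (\<Sum>l\<in>block_noise t k. ennreal (noise_variance vUL vDL l) *
      (\<integral>\<^sup>+\<omega>. ennreal (\<Sum>j | blk j = k. (noise_coeff k j (w t \<omega>) l)\<^sup>2) \<partial>M))"
    by (simp add: w_eq_iterate_on_past_noise[symmetric])
  finally show ?thesis .
qed

lemma noise_coeff_moment_le:
  assumes k: "k < K"
  shows "(\<Sum>l\<in>block_noise t k. ennreal (noise_variance vUL vDL l) *
          (\<integral>\<^sup>+\<omega>. ennreal (\<Sum>j | blk j = k. (noise_coeff k j (w t \<omega>) l)\<^sup>2) \<partial>M))
    \<le> ennreal (1 / (real L)\<^sup>2) *
        (ennreal (vUL t) * (\<integral>\<^sup>+\<omega>. ennreal (\<Sum>i<L. (dG i (s i (w t \<omega>)))\<^sup>2 * (norm (dg k i (w t \<omega>)))\<^sup>2) \<partial>M)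
       + ennreal (vDL k t) * (\<integral>\<^sup>+\<omega>. ennreal (\<Sum>i<L. (norm (dg k i (w t \<omega>)))\<^sup>2) \<partial>M))"
proof -
  define \<Phi>1 where "\<Phi>1 i \<omega> = (dG i (s i (w t \<omega>)))\<^sup>2 * (norm (dg k i (w t \<omega>)))\<^sup>2" for i \<omega>
  define \<Phi>2 where "\<Phi>2 i \<omega> = (norm (dg k i (w t \<omega>)))\<^sup>2" for i \<omega>
  have dg_w: "(\<lambda>\<omega>. dg k i (w t \<omega>)) \<in> borel_measurable M" if "i < L" for i
    using measurable_compose[OF w_measurable dg_measurable[OF k that]] .
  have \<Phi>1_measurable: "\<Phi>1 i \<in> borel_measurable M" if i: "i < L" for i
  proof -
    have "(\<lambda>\<omega>. dG i (s i (w t \<omega>))) \<in> borel_measurable M"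
      using measurable_compose[OF measurable_compose[OF w_measurable s_measurable[OF i]] dG_measurable[OF i]] .
    with dg_w[OF i] show ?thesis unfolding \<Phi>1_def[abs_def] by measurable
  qed
  have \<Phi>2_measurable: "\<Phi>2 i \<in> borel_measurable M" if "i < L" for i
    using dg_w[OF that] unfolding \<Phi>2_def[abs_def] by measurable
  have UL: "(\<Sum>j | blk j = k. (noise_coeff k j (w t \<omega>) (NUL t i))\<^sup>2) \<le> 1 / (real L)\<^sup>2 * \<Phi>1 i \<omega>" for i \<omega>
  proof -
    have "(\<Sum>j | blk j = k. (noise_coeff k j (w t \<omega>) (NUL t i))\<^sup>2)
        = 1 / (real L)\<^sup>2 * ((dG i (s i (w t \<omega>)))\<^sup>2 * (\<Sum>j | blk j = k. (dg k i (w t \<omega>) $ j)\<^sup>2))"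
      by (simp add: sum_distrib_left power_mult_distrib power_divide field_simps)
    also have "\<dots> \<le> 1 / (real L)\<^sup>2 * \<Phi>1 i \<omega>"
      unfolding \<Phi>1_def by (intro mult_left_mono sum_sq_components_le_norm_sq) auto
    finally show ?thesis .
  qed
  have DL: "(\<Sum>j | blk j = k. (noise_coeff k j (w t \<omega>) (NDL t k i))\<^sup>2) \<le> 1 / (real L)\<^sup>2 * \<Phi>2 i \<omega>" for i \<omega>
  proof -
    have "(\<Sum>j | blk j = k. (noise_coeff k j (w t \<omega>) (NDL t k i))\<^sup>2)
        = 1 / (real L)\<^sup>2 * (\<Sum>j | blk j = k. (dg k i (w t \<omega>) $ j)\<^sup>2)"
      by (simp add: sum_distrib_left power_divide)
    also have "\<dots> \<le> 1 / (real L)\<^sup>2 * \<Phi>2 i \<omega>"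
      unfolding \<Phi>2_def by (intro mult_left_mono sum_sq_components_le_norm_sq) auto
    finally show ?thesis .
  qed
  have "(\<Sum>l\<in>block_noise t k. ennreal (noise_variance vUL vDL l) *
          (\<integral>\<^sup>+\<omega>. ennreal (\<Sum>j | blk j = k. (noise_coeff k j (w t \<omega>) l)\<^sup>2) \<partial>M))
      \<le> ennreal (vUL t) * (\<Sum>i<L. \<integral>\<^sup>+\<omega>. ennreal (1 / (real L)\<^sup>2 * \<Phi>1 i \<omega>) \<partial>M)
       + ennreal (vDL k t) * (\<Sum>i<L. \<integral>\<^sup>+\<omega>. ennreal (1 / (real L)\<^sup>2 * \<Phi>2 i \<omega>) \<partial>M)"
    unfolding sum_block_noise sum_distrib_left noise_variance.simps
    by (intro add_mono sum_mono mult_left_mono nn_integral_mono ennreal_leI UL DL zero_le)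
  also have "\<dots> = ennreal (vUL t) * (ennreal (1 / (real L)\<^sup>2) * (\<integral>\<^sup>+\<omega>. ennreal (\<Sum>i<L. \<Phi>1 i \<omega>) \<partial>M))
       + ennreal (vDL k t) * (ennreal (1 / (real L)\<^sup>2) * (\<integral>\<^sup>+\<omega>. ennreal (\<Sum>i<L. \<Phi>2 i \<omega>) \<partial>M))"
    by (subst (1 2) sum_nn_integral_cmult) (auto intro: \<Phi>1_measurable \<Phi>2_measurable simp: \<Phi>1_def \<Phi>2_def)
  finally show ?thesis
    by (simp add: \<Phi>1_def \<Phi>2_def distrib_left mult.left_commute)
qed

definition noise_power :: "nat \<Rightarrow> ennreal" where
  "noise_power t = (\<Sum>k<K.
     ennreal (vUL t) * (\<integral>\<^sup>+\<omega>. ennreal (\<Sum>i<L. (dG i (s i (w t \<omega>)))\<^sup>2 * (norm (dg k i (w t \<omega>)))\<^sup>2) \<partial>M)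
   + ennreal (vDL k t) * (\<integral>\<^sup>+\<omega>. ennreal (\<Sum>i<L. (norm (dg k i (w t \<omega>)))\<^sup>2) \<partial>M))"

lemma expected_sq_norm_noise_le:
  "(\<integral>\<^sup>+\<omega>. ennreal ((norm (noise t \<omega>))\<^sup>2) \<partial>M) \<le> ennreal (1 / (real L)\<^sup>2) * noise_power t"
proof -
  have block: "(\<lambda>\<omega>. ennreal (\<Sum>j | blk j = k. (noise t \<omega> $ j)\<^sup>2)) \<in> borel_measurable M" for k
    using borel_measurable_vec_nth[OF noise_measurable] by measurable
  have "(\<integral>\<^sup>+\<omega>. ennreal ((norm (noise t \<omega>))\<^sup>2) \<partial>M)
      = (\<integral>\<^sup>+\<omega>. (\<Sum>k<K. ennreal (\<Sum>j | blk j = k. (noise t \<omega> $ j)\<^sup>2)) \<partial>M)"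
    by (intro nn_integral_cong) (simp add: norm_sq_eq_sum_blocks[OF blk_range] sum_nonneg)
  also have "\<dots> = (\<Sum>k<K. \<integral>\<^sup>+\<omega>. ennreal (\<Sum>j | blk j = k. (noise t \<omega> $ j)\<^sup>2) \<partial>M)"
    by (rule nn_integral_sum[OF block])
  also have "\<dots> \<le> (\<Sum>k<K. ennreal (1 / (real L)\<^sup>2) *
       (ennreal (vUL t) * (\<integral>\<^sup>+\<omega>. ennreal (\<Sum>i<L. (dG i (s i (w t \<omega>)))\<^sup>2 * (norm (dg k i (w t \<omega>)))\<^sup>2) \<partial>M)
      + ennreal (vDL k t) * (\<integral>\<^sup>+\<omega>. ennreal (\<Sum>i<L. (norm (dg k i (w t \<omega>)))\<^sup>2) \<partial>M)))"
    by (intro sum_mono order_trans[OF block_second_moment_le noise_coeff_moment_le]) auto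
  finally show ?thesis by (simp add: noise_power_def sum_distrib_left)
qed

end

locale noisy_vfl_descent = noisy_vfl_iteration +
  fixes F and \<alpha> :: real
  assumes F_strongly_convex: "strongly_convex_grad F gradF \<alpha>" and F_smooth: "smooth_grad F gradF \<beta>"
    and \<alpha>_pos: "0 < \<alpha>" and \<alpha>_le_\<beta>: "\<alpha> \<le> \<beta>"
begin

lemma gap_le_pathwise:
  "F (w T \<omega>) - F y \<le> (1 - \<alpha> / \<beta>) ^ T * (F w0 - F y)
     + (\<Sum>t<T. (1 - \<alpha> / \<beta>) ^ (T - t - 1) / (2 * \<beta>) * (norm (noise t \<omega>))\<^sup>2)"
proof -
  have step: "F (w (Suc t) \<omega>) - F y \<le> (1 - \<alpha> / \<beta>) * (F (w t \<omega>) - F y) + (norm (noise t \<omega>))\<^sup>2 / (2 * \<beta>)"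
    for t unfolding w_Suc noise_def
    by (rule inexact_gradient_step_contraction[OF F_strongly_convex F_smooth \<alpha>_pos \<alpha>_le_\<beta>])
  have "0 \<le> 1 - \<alpha> / \<beta>" using \<alpha>_pos \<alpha>_le_\<beta> by simp
  from linear_recurrence_unroll[where D = "\<lambda>t. F (w t \<omega>) - F y", OF step this]
  show ?thesis by (simp add: w_0)
qed

lemma expected_gap_le:
  assumes y_min: "\<And>x. F y \<le> F x"
  shows "(\<integral>\<^sup>+\<omega>. ennreal (F (w T \<omega>) - F y) \<partial>M) \<le> ennreal ((1 - \<alpha> / \<beta>) ^ T * (F w0 - F y))
     + (\<Sum>t<T. ennreal ((1 - \<alpha> / \<beta>) ^ (T - t - 1) / (2 * \<beta>)) * (ennreal (1 / (real L)\<^sup>2) * noise_power t))"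
proof -
  have \<rho>: "0 \<le> 1 - \<alpha> / \<beta>" and \<beta>: "0 < \<beta>" using \<alpha>_pos \<alpha>_le_\<beta> by simp_all
  have "(\<integral>\<^sup>+\<omega>. ennreal (F (w T \<omega>) - F y) \<partial>M) \<le> ennreal ((1 - \<alpha> / \<beta>) ^ T * (F w0 - F y))
      + (\<Sum>t<T. ennreal ((1 - \<alpha> / \<beta>) ^ (T - t - 1) / (2 * \<beta>)) * (\<integral>\<^sup>+\<omega>. ennreal ((norm (noise t \<omega>))\<^sup>2) \<partial>M))"
    using y_min \<rho> \<beta> noise_measurable by (intro nn_integral_le_const_plus_sum[OF gap_le_pathwise]) auto
  also have "\<dots> \<le> ennreal ((1 - \<alpha> / \<beta>) ^ T * (F w0 - F y))
      + (\<Sum>t<T. ennreal ((1 - \<alpha> / \<beta>) ^ (T - t - 1) / (2 * \<beta>)) * (ennreal (1 / (real L)\<^sup>2) * noise_power t))"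
    by (intro add_left_mono sum_mono mult_left_mono expected_sq_norm_noise_le) auto
  finally show ?thesis .
qed

end

theorem theorem1:
  fixes K L :: nat
    and blk :: "'n::finite \<Rightarrow> nat"
    and F :: "real ^ 'n \<Rightarrow> real" and gradF :: "real ^ 'n \<Rightarrow> real ^ 'n"
    and f :: "nat \<Rightarrow> real ^ 'n \<Rightarrow> real" and r :: "nat \<Rightarrow> real ^ 'n \<Rightarrow> real"
    and lam :: real
    and g :: "nat \<Rightarrow> nat \<Rightarrow> real ^ 'n \<Rightarrow> real" and dg :: "nat \<Rightarrow> nat \<Rightarrow> real ^ 'n \<Rightarrow> real ^ 'n"
    and G :: "nat \<Rightarrow> real \<Rightarrow> real"
    and s :: "nat \<Rightarrow> real ^ 'n \<Rightarrow> real"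
    and \<alpha> \<beta> :: real and wstar w0 :: "real ^ 'n"
    and M :: "'a measure"
    and nUL :: "nat \<Rightarrow> nat \<Rightarrow> 'a \<Rightarrow> real" and nDL :: "nat \<Rightarrow> nat \<Rightarrow> nat \<Rightarrow> 'a \<Rightarrow> real"
    and vUL :: "nat \<Rightarrow> real" and vDL :: "nat \<Rightarrow> nat \<Rightarrow> real"
    and w :: "nat \<Rightarrow> 'a \<Rightarrow> real ^ 'n"
    and T :: nat
  assumes K_pos: "K \<ge> 1" and L_pos: "L \<ge> 1"
    and blk_range: "\<forall>j. blk j < K"
    \<comment> \<open>local predictors: g k i w depends only on the block w_k, is continuously differentiable,
        with gradient dg k i\<close>
    and g_local: "\<forall>k<K. \<forall>i<L. \<forall>x. g k i x = g k i (block_proj blk k x)"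
    and g_deriv: "\<forall>k<K. \<forall>i<L. \<forall>x. (g k i has_derivative (\<lambda>h. dg k i x \<bullet> h)) (at x)"
    and dg_cont: "\<forall>k<K. \<forall>i<L. continuous_on UNIV (dg k i)"
    and G_diff: "\<forall>i<L. \<forall>z. G i differentiable (at z)"
    and s_def: "\<forall>i<L. \<forall>x. s i x = (\<Sum>k<K. g k i x)"
    \<comment> \<open>sample losses: block k of the gradient of f_i is G_i(s_i(w)) * grad g_{k,i}(w_k)\<close>
    and f_deriv: "\<forall>i<L. \<forall>x. (f i has_derivative
         (\<lambda>h. (\<chi> j. G i (s i x) * dg (blk j) i x $ j) \<bullet> h)) (at x)"
    and F_def: "\<forall>x. F x = (1 / real L) * (\<Sum>i<L. f i x) + lam * (\<Sum>k<K. r k x)"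
    and F_deriv: "\<forall>x. (F has_derivative (\<lambda>h. gradF x \<bullet> h)) (at x)"
    and \<alpha>_pos: "0 < \<alpha>" and \<alpha>_le_\<beta>: "\<alpha> \<le> \<beta>"
    and F_sc: "strongly_convex_grad F gradF \<alpha>"
    and F_smooth: "smooth_grad F gradF \<beta>"
    and wstar_min: "\<forall>x. F wstar \<le> F x"
    \<comment> \<open>noise model\<close>
    and M_prob: "prob_space M"
    and nUL_gauss: "\<forall>t. \<forall>i<L. gaussian_rv M (nUL t i) (vUL t)"
    and nDL_gauss: "\<forall>t. \<forall>k<K. \<forall>i<L. gaussian_rv M (nDL t k i) (vDL k t)"
    and noise_indep: "prob_space.indep_vars M (\<lambda>_. borel) (noise_family nUL nDL) (noise_index_set K L)"
    \<comment> \<open>the noisy iteration, step size 1/beta, deterministic start\<close>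
    and w_0: "\<forall>\<omega>. w 0 \<omega> = w0"
    and w_Suc: "\<forall>t \<omega>. w (Suc t) \<omega> = (\<chi> j. w t \<omega> $ j - (1 / \<beta>) *
         (gradF (w t \<omega>) $ j +
          (1 / real L) * (\<Sum>i<L. (deriv (G i) (s i (w t \<omega>)) * nUL t i \<omega> + nDL t (blk j) i \<omega>)
                                 * dg (blk j) i (w t \<omega>) $ j)))"
    and T_pos: "T \<ge> 1"
  shows "(\<integral>\<^sup>+ \<omega>. ennreal (F (w T \<omega>) - F wstar) \<partial>M)
     \<le> ennreal ((1 - \<alpha> / \<beta>) ^ T * (F w0 - F wstar))
       + ennreal (3 / (2 * (real L)\<^sup>2 * \<beta>)) *
         (\<Sum>t<T. ennreal ((1 - \<alpha> / \<beta>) ^ (T - t - 1)) *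
            (\<Sum>k<K. ennreal (vUL t) *
                       (\<integral>\<^sup>+ \<omega>. ennreal (\<Sum>i<L. (deriv (G i) (s i (w t \<omega>)))\<^sup>2 * (norm (dg k i (w t \<omega>)))\<^sup>2) \<partial>M)
                     + ennreal (vDL k t) *
                       (\<integral>\<^sup>+ \<omega>. ennreal (\<Sum>i<L. (norm (dg k i (w t \<omega>)))\<^sup>2) \<partial>M)))"
proof -
  interpret prob_space M by (rule M_prob)
  have \<beta>: "0 < \<beta>" using \<alpha>_pos \<alpha>_le_\<beta> by linarith
  interpret vfl: noisy_vfl_descent M K L blk "\<lambda>i. deriv (G i)" s dg gradF \<beta> w0 nUL nDL vUL vDL w F \<alpha>
  proof
    show "deriv (G i) \<in> borel_measurable borel" if "i < L" for i
      using G_diff that by (intro borel_measurable_deriv) blast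
    show "s i \<in> borel_measurable borel" if i: "i < L" for i
    proof -
      have "continuous_on UNIV (g k i)" if "k < K" for k
        using g_deriv that i by (intro continuous_at_imp_continuous_on ballI has_derivative_continuous) blast
      moreover have "s i = (\<lambda>x. \<Sum>k<K. g k i x)" using s_def i by auto
      ultimately show ?thesis by (auto intro!: continuous_on_sum borel_measurable_continuous_onI)
    qed
    show "gaussian_rv M (noise_family nUL nDL l) (noise_variance vUL vDL l)" if "l \<in> noise_index_set K L" for l
      using that nUL_gauss nDL_gauss by (auto simp: noise_index_set_def)
    show "w (Suc t) \<omega> = w t \<omega> - (1 / \<beta>) *\<^sub>R (gradF (w t \<omega>) + gradient_noise L blk (\<lambda>i. deriv (G i)) s dg
        (w t \<omega>) (\<lambda>i. nUL t i \<omega>) (\<lambda>k i. nDL t k i \<omega>))" for t \<omega>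
      using w_Suc by (simp add: vec_eq_iff gradient_noise_def)
  qed (use blk_range dg_cont F_deriv noise_indep w_0 F_sc F_smooth \<alpha>_pos \<alpha>_le_\<beta> in
      \<open>auto intro: borel_measurable_continuous_onI borel_measurable_gradient\<close>)
  have "(\<integral>\<^sup>+\<omega>. ennreal (F (w T \<omega>) - F wstar) \<partial>M) \<le> ennreal ((1 - \<alpha> / \<beta>) ^ T * (F w0 - F wstar))
      + (\<Sum>t<T. ennreal ((1 - \<alpha> / \<beta>) ^ (T - t - 1) / (2 * \<beta>)) * (ennreal (1 / (real L)\<^sup>2) * vfl.noise_power t))"
    using wstar_min by (intro vfl.expected_gap_le) auto
  also have "\<dots> \<le> ennreal ((1 - \<alpha> / \<beta>) ^ T * (F w0 - F wstar))
      + (\<Sum>t<T. ennreal (3 / (2 * (real L)\<^sup>2 * \<beta>)) * (ennreal ((1 - \<alpha> / \<beta>) ^ (T - t - 1)) * vfl.noise_power t))"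
    using \<alpha>_le_\<beta> \<beta> L_pos
    by (intro add_left_mono sum_mono ennreal_mult_mult_le) (auto simp: field_simps)
  finally show ?thesis by (simp add: sum_distrib_left vfl.noise_power_def)
qed

end
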